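(* Let $a\neq 0$ be a real constant and suppose $u=f(x,t)$ is a solution of the Hirota–Ramani equation $$u_t-u_{xxt}+a\,u_x(1-u_t)=0.$$ Then for every real $s$ the following functions are also solutions of this equation: $$f(x-s,t),\qquad f(x,t-s),\qquad f(x,t)+\frac{s}{a},$$ $$e^{s}f\big(xe^{s},\,te^{-3s}\big)+\frac{x}{a}\big(1-e^{2s}\big)+t\big(1-e^{-2s}\big).$$ *)

theory Defs
  imports Complex_Main
begin

definition hr_solution :: "real \<Rightarrow> (real \<Rightarrow> real \<Rightarrow> real) \<Rightarrow> bool" where
  "hr_solution a f \<longleftrightarrow>
     (\<exists>ft fx fxt fxxt :: real \<Rightarrow> real \<Rightarrow> real.
        (\<forall>x t. ((\<lambda>t'. f x t') has_real_derivative ft x t) (at t)) \<and>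
        (\<forall>x t. ((\<lambda>x'. f x' t) has_real_derivative fx x t) (at x)) \<and>
        (\<forall>x t. ((\<lambda>x'. ft x' t) has_real_derivative fxt x t) (at x)) \<and>
        (\<forall>x t. ((\<lambda>x'. fxt x' t) has_real_derivative fxxt x t) (at x)) \<and>
        (\<forall>x t. ft x t - fxxt x t + a * fx x t * (1 - ft x t) = 0))"

end

theory Submission
  imports Defs
begin

text \<open>All four maps are members of one family of affine changes of variables,
  u(x, t) \<mapsto> l u(l x + x0, t/l^3 + t0) + (1 - l^2) x/a + (1 - 1/l^2) t + c  with l nonzero.
  By the chain rule u_xxt is unchanged, 1 - u_t is multiplied by 1/l^2, and a u_x is
  multiplied by l^2 and shifted by 1 - l^2; in the equation these changes cancel exactly.
  The exponent -3 in the time scaling is forced by requiring that u_xxt be unchanged.\<close>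

lemma DERIV_comp_affine:
  fixes g :: "real \<Rightarrow> real"
  assumes "(g has_real_derivative D) (at (c * y + d))"
  shows "((\<lambda>y. g (c * y + d)) has_real_derivative D * c) (at y)"
proof -
  have "((\<lambda>y. c * y + d) has_real_derivative c) (at y)"
    by (auto intro!: derivative_eq_intros)
  from DERIV_chain2[OF assms this] show ?thesis .
qed

lemma hr_scaling_identity:
  fixes a l p q r :: real
  assumes "a \<noteq> 0" and "l \<noteq> 0"
  shows "l * (p * inverse (l ^ 3)) + (1 - inverse (l\<^sup>2)) - l * (q * l) * l * inverse (l ^ 3)
           + a * (l * (r * l) + (1 - l\<^sup>2) / a) * (1 - (l * (p * inverse (l ^ 3)) + (1 - inverse (l\<^sup>2))))
         = p - q + a * r * (1 - p)"
  using assms by (simp add: field_simps power2_eq_square power3_eq_cube)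

lemma hr_solution_symmetry:
  fixes a l x0 t0 c :: real
  assumes "hr_solution a f" and "a \<noteq> 0" and "l \<noteq> 0"
  shows "hr_solution a (\<lambda>x t. l * f (l * x + x0) (inverse (l ^ 3) * t + t0)
                               + (1 - l\<^sup>2) / a * x + (1 - inverse (l\<^sup>2)) * t + c)"
proof -
  obtain ft fx fxt fxxt :: "real \<Rightarrow> real \<Rightarrow> real" where
    ft: "\<And>x t. ((\<lambda>t'. f x t') has_real_derivative ft x t) (at t)" and
    fx: "\<And>x t. ((\<lambda>x'. f x' t) has_real_derivative fx x t) (at x)" and
    fxt: "\<And>x t. ((\<lambda>x'. ft x' t) has_real_derivative fxt x t) (at x)" and
    fxxt: "\<And>x t. ((\<lambda>x'. fxt x' t) has_real_derivative fxxt x t) (at x)" and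
    eq: "\<And>x t. ft x t - fxxt x t + a * fx x t * (1 - ft x t) = 0"
    using assms(1) unfolding hr_solution_def by blast
  let ?X = "\<lambda>x. l * x + x0" and ?T = "\<lambda>t. inverse (l ^ 3) * t + t0"
  show ?thesis
    unfolding hr_solution_def
  proof (intro exI conjI allI)
    fix x t
    show "((\<lambda>t'. l * f (?X x) (?T t') + (1 - l\<^sup>2) / a * x + (1 - inverse (l\<^sup>2)) * t' + c)
          has_real_derivative l * (ft (?X x) (?T t) * inverse (l ^ 3)) + (1 - inverse (l\<^sup>2))) (at t)"
      by (auto intro!: derivative_eq_intros DERIV_comp_affine ft)
    show "((\<lambda>x'. l * f (?X x') (?T t) + (1 - l\<^sup>2) / a * x' + (1 - inverse (l\<^sup>2)) * t + c)
          has_real_derivative l * (fx (?X x) (?T t) * l) + (1 - l\<^sup>2) / a) (at x)"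
      using assms(2) by (auto intro!: derivative_eq_intros DERIV_comp_affine[where g = "\<lambda>x'. f x' _"] fx)
    show "((\<lambda>x'. l * (ft (?X x') (?T t) * inverse (l ^ 3)) + (1 - inverse (l\<^sup>2)))
          has_real_derivative l * (fxt (?X x) (?T t) * l) * inverse (l ^ 3)) (at x)"
      by (auto intro!: derivative_eq_intros DERIV_comp_affine[where g = "\<lambda>x'. ft x' _"] fxt)
    show "((\<lambda>x'. l * (fxt (?X x') (?T t) * l) * inverse (l ^ 3))
          has_real_derivative l * (fxxt (?X x) (?T t) * l) * l * inverse (l ^ 3)) (at x)"
      by (auto intro!: derivative_eq_intros DERIV_comp_affine[where g = "\<lambda>x'. fxt x' _"] fxxt)
    show "l * (ft (?X x) (?T t) * inverse (l ^ 3)) + (1 - inverse (l\<^sup>2))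
          - l * (fxxt (?X x) (?T t) * l) * l * inverse (l ^ 3)
          + a * (l * (fx (?X x) (?T t) * l) + (1 - l\<^sup>2) / a)
            * (1 - (l * (ft (?X x) (?T t) * inverse (l ^ 3)) + (1 - inverse (l\<^sup>2)))) = 0"
      unfolding hr_scaling_identity[OF assms(2,3)] by (rule eq)
  qed
qed

theorem theorem3p1:
  fixes a s :: real and f :: "real \<Rightarrow> real \<Rightarrow> real"
  assumes "a \<noteq> 0" and "hr_solution a f"
  shows "hr_solution a (\<lambda>x t. f (x - s) t) \<and>
         hr_solution a (\<lambda>x t. f x (t - s)) \<and>
         hr_solution a (\<lambda>x t. f x t + s / a) \<and>
         hr_solution a (\<lambda>x t. exp s * f (x * exp s) (t * exp (- 3 * s))
                              + x / a * (1 - exp (2 * s)) + t * (1 - exp (- 2 * s)))"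
proof (intro conjI)
  note symmetry = hr_solution_symmetry[OF assms(2,1)]
  show "hr_solution a (\<lambda>x t. f (x - s) t)"
    using symmetry[of 1 "- s" 0 0] by simp
  show "hr_solution a (\<lambda>x t. f x (t - s))"
    using symmetry[of 1 0 "- s" 0] by simp
  show "hr_solution a (\<lambda>x t. f x t + s / a)"
    using symmetry[of 1 0 0 "s / a"] by simp
  have "exp (- 3 * s) = inverse (exp s ^ 3)" "exp (2 * s) = (exp s)\<^sup>2"
    "exp (- 2 * s) = inverse ((exp s)\<^sup>2)"
    by (simp_all add: exp_minus[symmetric] exp_of_nat_mult[symmetric])
  then show "hr_solution a (\<lambda>x t. exp s * f (x * exp s) (t * exp (- 3 * s))
                              + x / a * (1 - exp (2 * s)) + t * (1 - exp (- 2 * s)))"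
    using symmetry[of "exp s" 0 0 0] by (simp add: mult.commute)
qed

end
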